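(* For $u\in\{0,1\}^3$ and $n\ge1$, let $f_u(X,Y,Z)=\bigoplus_{i=1}^n t_u(x_iy_iz_i)$, where Alice, Bob and Carol hold $X=(x_1,\dots,x_n)$, $Y=(y_1,\dots,y_n)$, $Z=(z_1,\dots,z_n)\in\{0,1\}^n$ respectively, $t_u(w)=1$ if $w=u$ and $0$ otherwise, and the inputs satisfy the promise that every triple $x_iy_iz_i$ has the same parity as $u$ (i.e. $x_i\oplus y_i\oplus z_i=u_1\oplus u_2\oplus u_3$ for all $i$). Then each of the eight functions $f_u$ can be computed by a deterministic classical protocol (no shared entanglement) with three bits of communication, at the end of which Alice knows the value; moreover, none of these eight functions can be computed by such a deterministic classical protocol with only two bits of communication.
   Context: In a deterministic classical communication protocol, the three parties have no shared randomness or entanglement and exchange classical bits; the cost is the total number of bits communicated, and the protocol must give the correct value for every input satisfying the promise. *)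

theory Defs
  imports Main
begin

datatype party = Alice | Bob | Carol

text \<open>Deterministic classical three-party protocols (no shared randomness or entanglement),
  in the broadcast (blackboard) model: at each internal node a designated party sends one bit,
  computed from its own input only (the position in the tree encodes the transcript so far);
  at a leaf, Alice outputs a value computed from her own input (the leaf encodes the transcript).\<close>
datatype 'i protocol =
    Output "'i \<Rightarrow> bool"
  | Send party "'i \<Rightarrow> bool" "'i protocol" "'i protocol"

definition input_of :: "party \<Rightarrow> 'i \<Rightarrow> 'i \<Rightarrow> 'i \<Rightarrow> 'i" where
  "input_of p x y z = (case p of Alice \<Rightarrow> x | Bob \<Rightarrow> y | Carol \<Rightarrow> z)"

fun run :: "'i protocol \<Rightarrow> 'i \<Rightarrow> 'i \<Rightarrow> 'i \<Rightarrow> bool" where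
  "run (Output g) x y z = g x"
| "run (Send p m P0 P1) x y z =
     (if m (input_of p x y z) then run P1 x y z else run P0 x y z)"

fun cost :: "'i protocol \<Rightarrow> nat" where
  "cost (Output g) = 0"
| "cost (Send p m P0 P1) = Suc (max (cost P0) (cost P1))"

definition xor3 :: "bool \<Rightarrow> bool \<Rightarrow> bool \<Rightarrow> bool" where
  "xor3 a b c = ((a \<noteq> b) \<noteq> c)"

definition promise :: "bool \<times> bool \<times> bool \<Rightarrow> nat \<Rightarrow> bool list \<Rightarrow> bool list \<Rightarrow> bool list \<Rightarrow> bool" where
  "promise u n X Y Z \<longleftrightarrow> length X = n \<and> length Y = n \<and> length Z = n \<and>
     (\<forall>i<n. xor3 (X ! i) (Y ! i) (Z ! i) = xor3 (fst u) (fst (snd u)) (snd (snd u)))"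

definition f :: "bool \<times> bool \<times> bool \<Rightarrow> bool list \<Rightarrow> bool list \<Rightarrow> bool list \<Rightarrow> bool" where
  "f u X Y Z = odd (card {i. i < length X \<and> (X ! i, Y ! i, Z ! i) = u})"

definition computes :: "bool \<times> bool \<times> bool \<Rightarrow> nat \<Rightarrow> bool list protocol \<Rightarrow> bool" where
  "computes u n P \<longleftrightarrow> (\<forall>X Y Z. promise u n X Y Z \<longrightarrow> run P X Y Z = f u X Y Z)"

end

theory Submission imports Defs begin

(* Let a, b, c count the positions where X, Y, Z differ from u1, u2, u3, and N the positions i
   with x_i y_i z_i = u. By the promise every other position differs from u in exactly two
   coordinates, so a + b + c = 2 (n - N) and f_u = N mod 2 is determined by n and
   (a + b + c) mod 4. Bob sends b mod 4 and Carol the second bit of c; the last bit of c is the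
   parity of a + b, which Alice knows after Bob's message.

   For the lower bound, complementing the inputs reduces every f_u to u = 000, and n = 3
   suffices. Two promise inputs with the same Alice part and different values must get
   different transcripts. In a one-bit protocol where q speaks, the message therefore
   2-colours q's inputs so that every such pair is coloured differently, which is impossible
   once the pairs form an odd cycle in q's inputs. The first bit of a two-bit protocol splits
   the speaker's inputs into two classes, and a finite check shows that for every split one
   class still contains such odd triangles for all three parties. *)

fun map_inputs :: "('j \<Rightarrow> 'i) \<Rightarrow> ('j \<Rightarrow> 'i) \<Rightarrow> ('j \<Rightarrow> 'i) \<Rightarrow> 'i protocol \<Rightarrow> 'j protocol" where
  "map_inputs gA gB gC (Output h) = Output (h \<circ> gA)"
| "map_inputs gA gB gC (Send p m P0 P1) =
     Send p (m \<circ> input_of p gA gB gC) (map_inputs gA gB gC P0) (map_inputs gA gB gC P1)"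

lemma run_map_inputs: "run (map_inputs gA gB gC P) x y z = run P (gA x) (gB y) (gC z)"
proof (induction P)
  case (Send p m P0 P1)
  have "input_of p gA gB gC (input_of p x y z) = input_of p (gA x) (gB y) (gC z)"
    by (cases p) (simp_all add: input_of_def)
  with Send show ?case by simp
qed simp

lemma cost_map_inputs [simp]: "cost (map_inputs gA gB gC P) = cost P"
  by (induction P) simp_all

definition send :: "party \<Rightarrow> ('i \<Rightarrow> bool) \<Rightarrow> (bool \<Rightarrow> 'i protocol) \<Rightarrow> 'i protocol" where
  "send p m K = Send p m (K False) (K True)"

lemma run_send [simp]: "run (send p m K) x y z = run (K (m (input_of p x y z))) x y z"
  by (simp add: send_def)

lemma cost_send [simp]: "cost (send p m K) = Suc (max (cost (K False)) (cost (K True)))"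
  by (simp add: send_def)

definition mismatches :: "bool \<Rightarrow> bool list \<Rightarrow> nat" where
  "mismatches b X = length (filter (\<lambda>x. x \<noteq> b) X)"

lemma card_Collect_less_eq_sum: "card {i. i < (n::nat) \<and> P i} = (\<Sum>i<n. of_bool (P i))"
proof -
  have "{i. i < n \<and> P i} = {..<n} \<inter> {i. P i}" by auto
  then show ?thesis by simp
qed

lemma mismatches_eq_sum: "mismatches b X = (\<Sum>i<length X. of_bool (X ! i \<noteq> b))"
  unfolding mismatches_def length_filter_conv_card card_Collect_less_eq_sum ..

lemma promise_mismatches_eq:
  assumes "promise u n X Y Z"
  shows "mismatches (fst u) X + mismatches (fst (snd u)) Y + mismatches (snd (snd u)) Z
     + 2 * card {i. i < length X \<and> (X ! i, Y ! i, Z ! i) = u} = 2 * n"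
proof -
  obtain u1 u2 u3 where u: "u = (u1, u2, u3)" by (cases u)
  have len: "length X = n" "length Y = n" "length Z = n"
    and parity: "\<And>i. i < n \<Longrightarrow> xor3 (X ! i) (Y ! i) (Z ! i) = xor3 u1 u2 u3"
    using assms by (auto simp: promise_def u)
  have "mismatches u1 X + mismatches u2 Y + mismatches u3 Z
      + 2 * card {i. i < length X \<and> (X ! i, Y ! i, Z ! i) = u}
    = (\<Sum>i<n. of_bool (X ! i \<noteq> u1) + of_bool (Y ! i \<noteq> u2) + of_bool (Z ! i \<noteq> u3)
        + 2 * of_bool ((X ! i, Y ! i, Z ! i) = u))"
    unfolding mismatches_eq_sum card_Collect_less_eq_sum len
    by (simp only: sum.distrib sum_distrib_left)
  also have "\<dots> = (\<Sum>i<n. 2)"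
    using parity by (intro sum.cong) (auto simp: xor3_def u)
  finally show ?thesis by (simp add: u)
qed

lemma parity_from_mod_4:
  fixes a b c N n :: nat
  assumes "a + b + c + 2 * N = 2 * n"
  shows "odd N \<longleftrightarrow> odd n \<noteq> ((a + b mod 4 + c mod 4) mod 4 = 2)"
proof -
  have "(a + b mod 4 + c mod 4) mod 4 = (a + b + c) mod 4"
    by (metis mod_add_left_eq mod_add_right_eq)
  also have "a + b + c = 2 * (n - N)"
    using assms by simp
  also have "2 * (n - N) mod 4 = 2 * ((n - N) mod 2)"
    using mod_mult_mult1[of 2 "n - N" 2] by simp
  finally have "(a + b mod 4 + c mod 4) mod 4 = 2 * ((n - N) mod 2)" .
  moreover have "N \<le> n" using assms by simp
  then have "odd N \<longleftrightarrow> odd n \<noteq> ((n - N) mod 2 = 1)"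
    by presburger
  ultimately show ?thesis by auto
qed

lemma mod_4_eq_bits: "2 * of_bool (odd (k div 2)) + of_bool (odd k) = k mod (4::nat)"
  using mod_mult2_eq[of k 2 2] by (simp add: of_bool_odd_eq_mod_2)

lemma mod_2_of_even_sum:
  fixes a b c :: nat
  assumes "even (a + b + c)"
  shows "(a + b mod 4) mod 2 = c mod 2"
proof -
  have "(a + b mod 4) mod 2 = (a + b) mod 2"
    by (metis mod_add_right_eq mod_mod_cancel dvd_triv_left numeral_Bit0_eq_double)
  with assms show ?thesis by (metis even_add mod2_eq_if)
qed

definition alice_output :: "bool \<times> bool \<times> bool \<Rightarrow> nat \<Rightarrow> bool list \<Rightarrow> bool \<Rightarrow> bool \<Rightarrow> bool \<Rightarrow> bool" where
  "alice_output u n X b0 b1 c1 =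
     (let a = mismatches (fst u) X;
          b = 2 * of_bool b1 + of_bool b0;
          c = 2 * of_bool c1 + (a + b) mod 2
      in odd n \<noteq> ((a + b + c) mod 4 = 2))"

definition three_bit_protocol :: "bool \<times> bool \<times> bool \<Rightarrow> nat \<Rightarrow> bool list protocol" where
  "three_bit_protocol u n =
     send Bob (\<lambda>Y. odd (mismatches (fst (snd u)) Y)) (\<lambda>b0.
     send Bob (\<lambda>Y. odd (mismatches (fst (snd u)) Y div 2)) (\<lambda>b1.
     send Carol (\<lambda>Z. odd (mismatches (snd (snd u)) Z div 2)) (\<lambda>c1.
     Output (\<lambda>X. alice_output u n X b0 b1 c1))))"

lemma cost_three_bit_protocol: "cost (three_bit_protocol u n) = 3"
  by (simp add: three_bit_protocol_def)

lemma run_three_bit_protocol: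
  "run (three_bit_protocol u n) X Y Z =
     alice_output u n X (odd (mismatches (fst (snd u)) Y)) (odd (mismatches (fst (snd u)) Y div 2))
       (odd (mismatches (snd (snd u)) Z div 2))"
  by (simp add: three_bit_protocol_def input_of_def)

lemma computes_three_bit_protocol: "computes u n (three_bit_protocol u n)"
  unfolding computes_def
proof (intro allI impI)
  fix X Y Z
  assume "promise u n X Y Z"
  define a where "a = mismatches (fst u) X"
  define b where "b = mismatches (fst (snd u)) Y"
  define c where "c = mismatches (snd (snd u)) Z"
  define N where "N = card {i. i < length X \<and> (X ! i, Y ! i, Z ! i) = u}"
  have count: "a + b + c + 2 * N = 2 * n"
    using promise_mismatches_eq[OF \<open>promise u n X Y Z\<close>] by (simp add: a_def b_def c_def N_def)
  then have "even (a + b + c)"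
    by (metis dvd_triv_left even_add)
  then have "(a + b mod 4) mod 2 = c mod 2" by (rule mod_2_of_even_sum)
  then have "2 * of_bool (odd (c div 2)) + (a + b mod 4) mod 2 = c mod 4"
    using mod_4_eq_bits[of c] by (simp add: of_bool_odd_eq_mod_2)
  then have "alice_output u n X (odd b) (odd (b div 2)) (odd (c div 2)) \<longleftrightarrow> odd N"
    using parity_from_mod_4[OF count]
    by (simp add: alice_output_def Let_def mod_4_eq_bits flip: a_def)
  then show "run (three_bit_protocol u n) X Y Z = f u X Y Z"
    by (simp add: run_three_bit_protocol f_def N_def flip: a_def b_def c_def)
qed

definition flip :: "bool \<Rightarrow> bool list \<Rightarrow> bool list" where
  "flip b = map (\<lambda>x. x \<noteq> b)"

lemma promise_flip:
  "promise u n (flip (fst u) X) (flip (fst (snd u)) Y) (flip (snd (snd u)) Z)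
     \<longleftrightarrow> promise (False, False, False) n X Y Z"
  by (cases u) (auto simp: promise_def flip_def xor3_def)

lemma length_flip [simp]: "length (flip b X) = length X"
  by (simp add: flip_def)

lemma f_flip:
  assumes "length Y = length X" "length Z = length X"
  shows "f u (flip (fst u) X) (flip (fst (snd u)) Y) (flip (snd (snd u)) Z)
    = f (False, False, False) X Y Z"
proof -
  have "{i. i < length X \<and> (flip (fst u) X ! i, flip (fst (snd u)) Y ! i, flip (snd (snd u)) Z ! i) = u}
      = {i. i < length X \<and> (X ! i, Y ! i, Z ! i) = (False, False, False)}"
    using assms by (cases u) (auto simp: flip_def)
  then show ?thesis by (simp add: f_def)
qed

lemma computes_flip:
  assumes "computes u n P"
  shows "computes (False, False, False) n
    (map_inputs (flip (fst u)) (flip (fst (snd u))) (flip (snd (snd u))) P)"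
  unfolding computes_def
proof (intro allI impI)
  fix X Y Z
  assume prom: "promise (False, False, False) n X Y Z"
  then have "run P (flip (fst u) X) (flip (fst (snd u)) Y) (flip (snd (snd u)) Z)
      = f u (flip (fst u) X) (flip (fst (snd u)) Y) (flip (snd (snd u)) Z)"
    using assms by (simp add: computes_def promise_flip)
  also have "\<dots> = f (False, False, False) X Y Z"
    using prom by (intro f_flip) (simp_all add: promise_def)
  finally show "run (map_inputs (flip (fst u)) (flip (fst (snd u))) (flip (snd (snd u))) P) X Y Z
      = f (False, False, False) X Y Z"
    by (simp add: run_map_inputs)
qed

definition word :: "nat \<Rightarrow> bool list" where
  "word k = map (bit k) [0..<3]"

definition f_word :: "nat \<Rightarrow> nat \<Rightarrow> bool" where
  "f_word x y = odd (length (filter (\<lambda>i. \<not> bit x i \<and> \<not> bit y i) [0..<3]))"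

lemma promise_word: "promise (False, False, False) 3 (word x) (word y) (word (xor x y))"
  by (simp add: promise_def word_def xor3_def bit_xor_iff)

lemma length_filter_upt: "length (filter P [0..<n]) = card {i. i < n \<and> P i}"
proof -
  have "set (filter P [0..<n]) = {i. i < n \<and> P i}" by auto
  then show ?thesis by (metis distinct_card distinct_filter distinct_upt)
qed

lemma f_word_eq: "f (False, False, False) (word x) (word y) (word (xor x y)) = f_word x y"
proof -
  have "{i. i < length (word x) \<and> (word x ! i, word y ! i, word (xor x y) ! i) = (False, False, False)}
      = {i. i < 3 \<and> \<not> bit x i \<and> \<not> bit y i}"
    by (auto simp: word_def bit_xor_iff)
  then show ?thesis by (simp add: f_def f_word_def length_filter_upt)
qed

type_synonym vertex = "nat \<times> nat \<times> nat"
type_synonym edge = "vertex \<times> vertex"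

fun input :: "party \<Rightarrow> vertex \<Rightarrow> nat" where
  "input q (x, y, z) = input_of q x y z"

fun is_edge :: "edge \<Rightarrow> bool" where
  "is_edge ((x, y, z), (x', y', z')) \<longleftrightarrow>
     x = x' \<and> z = xor x y \<and> z' = xor x' y' \<and> f_word x y \<noteq> f_word x' y'"

fun odd_triangle :: "party \<Rightarrow> edge \<times> edge \<times> edge \<Rightarrow> bool" where
  "odd_triangle q ((a1, b1), (a2, b2), (a3, b3)) \<longleftrightarrow>
     input q b1 = input q a2 \<and> input q b2 = input q a3 \<and> input q b3 = input q a1"

(* Found by a computer search. Both ends of an edge have the same Alice input, so for Alice
   an edge traversed three times is an odd triangle. *)
definition triangles :: "party \<Rightarrow> (edge \<times> edge \<times> edge) list" where
  "triangles q = (case q of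
     Alice \<Rightarrow> map (\<lambda>e. (e, e, e)) [
       ((0, 2, 2), (0, 3, 3)),
       ((0, 6, 6), (0, 7, 7)),
       ((1, 2, 3), (1, 7, 6)),
       ((4, 5, 1), (4, 7, 3)),
       ((6, 0, 6), (6, 7, 1)),
       ((4, 0, 4), (4, 5, 1))] |
     Bob \<Rightarrow> [
       (((1, 0, 1), (1, 3, 2)), ((1, 3, 2), (1, 7, 6)), ((6, 7, 1), (6, 0, 6))),
       (((3, 0, 3), (3, 7, 4)), ((4, 7, 3), (4, 6, 2)), ((4, 6, 2), (4, 0, 4))),
       (((0, 2, 2), (0, 3, 3)), ((1, 3, 2), (1, 0, 1)), ((1, 0, 1), (1, 2, 3))),
       (((0, 2, 2), (0, 3, 3)), ((0, 3, 3), (0, 7, 7)), ((3, 7, 4), (3, 2, 1))),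
       (((0, 3, 3), (0, 7, 7)), ((4, 7, 3), (4, 5, 1)), ((4, 5, 1), (4, 3, 7))),
       (((0, 6, 6), (0, 7, 7)), ((4, 7, 3), (4, 2, 6)), ((1, 2, 3), (1, 6, 7))),
       (((1, 0, 1), (1, 2, 3)), ((3, 2, 1), (3, 5, 6)), ((6, 5, 3), (6, 0, 6))),
       (((1, 5, 4), (1, 7, 6)), ((6, 7, 1), (6, 2, 4)), ((3, 2, 1), (3, 5, 6))),
       (((3, 0, 3), (3, 7, 4)), ((4, 7, 3), (4, 2, 6)), ((4, 2, 6), (4, 0, 4))),
       (((0, 2, 2), (0, 6, 6)), ((4, 6, 2), (4, 3, 7)), ((4, 3, 7), (4, 2, 6))),
       (((0, 2, 2), (0, 6, 6)), ((4, 6, 2), (4, 7, 3)), ((1, 7, 6), (1, 2, 3))),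
       (((1, 0, 1), (1, 3, 2)), ((4, 3, 7), (4, 6, 2)), ((4, 6, 2), (4, 0, 4)))] |
     Carol \<Rightarrow> [
       (((1, 0, 1), (1, 3, 2)), ((1, 3, 2), (1, 7, 6)), ((6, 0, 6), (6, 7, 1))),
       (((0, 3, 3), (0, 7, 7)), ((4, 3, 7), (4, 5, 1)), ((4, 5, 1), (4, 7, 3))),
       (((3, 0, 3), (3, 7, 4)), ((4, 0, 4), (4, 6, 2)), ((4, 6, 2), (4, 7, 3))),
       (((0, 2, 2), (0, 6, 6)), ((4, 2, 6), (4, 7, 3)), ((4, 7, 3), (4, 6, 2))),
       (((0, 2, 2), (0, 3, 3)), ((1, 2, 3), (1, 7, 6)), ((1, 7, 6), (1, 3, 2))),
       (((1, 5, 4), (1, 6, 7)), ((4, 3, 7), (4, 5, 1)), ((4, 5, 1), (4, 0, 4))),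
       (((0, 3, 3), (0, 7, 7)), ((4, 3, 7), (4, 2, 6)), ((6, 0, 6), (6, 5, 3))),
       (((0, 2, 2), (0, 3, 3)), ((1, 2, 3), (1, 0, 1)), ((1, 0, 1), (1, 3, 2))),
       (((0, 2, 2), (0, 3, 3)), ((1, 2, 3), (1, 6, 7)), ((4, 3, 7), (4, 6, 2))),
       (((1, 0, 1), (1, 2, 3)), ((3, 0, 3), (3, 5, 6)), ((3, 5, 6), (3, 2, 1))),
       (((1, 5, 4), (1, 7, 6)), ((3, 5, 6), (3, 2, 1)), ((6, 7, 1), (6, 2, 4))),
       (((1, 3, 2), (1, 6, 7)), ((4, 3, 7), (4, 2, 6)), ((1, 7, 6), (1, 3, 2))),
       (((3, 2, 1), (3, 7, 4)), ((4, 0, 4), (4, 2, 6)), ((6, 0, 6), (6, 7, 1))),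
       (((1, 5, 4), (1, 7, 6)), ((3, 5, 6), (3, 0, 3)), ((6, 5, 3), (6, 2, 4)))])"

definition within :: "party \<Rightarrow> (nat \<Rightarrow> bool) \<Rightarrow> edge \<Rightarrow> bool" where
  "within p M e \<longleftrightarrow> M (input p (fst e)) \<and> M (input p (snd e))"

definition obstructed :: "(edge \<Rightarrow> bool) \<Rightarrow> bool" where
  "obstructed E \<longleftrightarrow>
     (\<forall>q\<in>{Alice, Bob, Carol}. \<exists>(e1, e2, e3)\<in>set (triangles q). E e1 \<and> E e2 \<and> E e3)"

lemma triangles_are_odd:
  "\<forall>q\<in>{Alice, Bob, Carol}. \<forall>(e1, e2, e3)\<in>set (triangles q).
     odd_triangle q (e1, e2, e3) \<and> is_edge e1 \<and> is_edge e2 \<and> is_edge e3"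
  by code_simp

(* The splits of {0..<8} into two classes, listed with 0 in the first class. *)
lemma every_split_obstructed:
  "\<forall>p\<in>{Alice, Bob, Carol}. \<forall>S\<in>set (subseqs [1..<8]).
     obstructed (within p (\<lambda>k. k \<in> set (0 # S))) \<or>
     obstructed (within p (\<lambda>k. k < 8 \<and> k \<notin> set (0 # S)))"
  by code_simp

lemma one_bit_protocol_separates:
  assumes "cost P \<le> 1"
  obtains q :: party and m :: "'i \<Rightarrow> bool" where
    "\<And>x y z y' z'. run P x y z \<noteq> run P x y' z' \<Longrightarrow> m (input_of q x y z) \<noteq> m (input_of q x y' z')"
proof (cases P)
  case (Output h)
  then show ?thesis by (intro that[where q = Alice and m = "\<lambda>_. True"]) simp
next
  case (Send q m P0 P1)
  with assms obtain h0 h1 where "P0 = Output h0" "P1 = Output h1"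
    by (cases P0; cases P1) simp_all
  with Send show ?thesis by (intro that[where q = q and m = m]) (auto split: if_splits)
qed

fun correct_at :: "nat protocol \<Rightarrow> vertex \<Rightarrow> bool" where
  "correct_at Q (x, y, z) \<longleftrightarrow> run Q x y z = f_word x y"

lemma correct_at_Send:
  assumes "correct_at (Send p m Q0 Q1) v" "m (input p v) = c"
  shows "correct_at (if c then Q1 else Q0) v"
  using assms by (cases v) (auto simp: input_of_def split: party.splits)

lemma one_bit_protocol_fails:
  assumes "cost Q \<le> 1" "obstructed E"
    and correct: "\<And>e. E e \<Longrightarrow> is_edge e \<Longrightarrow> correct_at Q (fst e) \<and> correct_at Q (snd e)"
  shows False
proof -
  obtain q :: party and m :: "nat \<Rightarrow> bool" where sep:
    "\<And>x y z y' z'. run Q x y z \<noteq> run Q x y' z' \<Longrightarrow> m (input_of q x y z) \<noteq> m (input_of q x y' z')"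
    using one_bit_protocol_separates[OF assms(1)] by metis
  have separated: "m (input q a) \<noteq> m (input q b)" if "E (a, b)" "is_edge (a, b)" for a b
    using that correct[of "(a, b)"] sep by (cases a; cases b) auto
  have "q \<in> {Alice, Bob, Carol}" by (cases q) simp_all
  with \<open>obstructed E\<close> triangles_are_odd obtain a1 b1 a2 b2 a3 b3 where
    triangle: "odd_triangle q ((a1, b1), (a2, b2), (a3, b3))"
    and in_E: "E (a1, b1)" "E (a2, b2)" "E (a3, b3)"
    and edges: "is_edge (a1, b1)" "is_edge (a2, b2)" "is_edge (a3, b3)"
    unfolding obstructed_def by fastforce
  have "m (input q a1) \<noteq> m (input q b1)" "m (input q a2) \<noteq> m (input q b2)"
    "m (input q a3) \<noteq> m (input q b3)"
    using separated in_E edges by simp_all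
  with triangle show False by auto
qed

lemma obstructed_mono: "obstructed E \<Longrightarrow> (\<And>e. E e \<Longrightarrow> E' e) \<Longrightarrow> obstructed E'"
  unfolding obstructed_def by blast

lemma filter_in_subseqs: "filter P xs \<in> set (subseqs xs)"
  by (induction xs) (auto simp: Let_def)

lemma obstructed_class:
  fixes m :: "nat \<Rightarrow> bool"
  obtains c where "obstructed (within p (\<lambda>k. k < 8 \<and> m k = c))"
proof -
  define S where "S = filter (\<lambda>k. m k = m 0) [1..<8]"
  have "p \<in> {Alice, Bob, Carol}" by (cases p) simp_all
  moreover have "S \<in> set (subseqs [1..<8])"
    unfolding S_def by (rule filter_in_subseqs)
  ultimately have "obstructed (within p (\<lambda>k. k \<in> set (0 # S))) \<or>
      obstructed (within p (\<lambda>k. k < 8 \<and> k \<notin> set (0 # S)))"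
    using every_split_obstructed by blast
  moreover have "(\<lambda>k. k \<in> set (0 # S)) = (\<lambda>k. k < 8 \<and> m k = m 0)"
    by (auto simp: S_def fun_eq_iff)
  moreover have "(\<lambda>k. k < 8 \<and> k \<notin> set (0 # S)) = (\<lambda>k. k < 8 \<and> m k = (\<not> m 0))"
    by (fastforce simp: S_def fun_eq_iff)
  ultimately show thesis
    by (elim disjE) (simp_all add: that)
qed

lemma two_bit_protocol_fails:
  assumes "cost Q \<le> 2" and correct: "\<And>x y. correct_at Q (x, y, xor x y)"
  shows False
proof -
  have correct_on_edges: "correct_at Q (fst e) \<and> correct_at Q (snd e)" if "is_edge e" for e
    using that correct by (cases e rule: is_edge.cases) simp
  show False
  proof (cases Q)
    case (Output h)
    obtain c where "obstructed (within Alice (\<lambda>k. k < 8 \<and> True = c))"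
      by (rule obstructed_class)
    then have "obstructed (\<lambda>_. True)"
      by (rule obstructed_mono) simp
    with Output correct_on_edges show False
      by (intro one_bit_protocol_fails[of Q "\<lambda>_. True"]) simp_all
  next
    case (Send p m Q0 Q1)
    obtain c where side: "obstructed (within p (\<lambda>k. k < 8 \<and> m k = c))"
      by (rule obstructed_class)
    show False
    proof (rule one_bit_protocol_fails[OF _ side])
      show "cost (if c then Q1 else Q0) \<le> 1" using Send assms(1) by simp
    next
      fix e
      assume "within p (\<lambda>k. k < 8 \<and> m k = c) e" "is_edge e"
      then show "correct_at (if c then Q1 else Q0) (fst e) \<and> correct_at (if c then Q1 else Q0) (snd e)"
        using correct_on_edges[of e] correct_at_Send[of p m Q0 Q1 _ c]
        unfolding Send within_def by simp
    qed
  qed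
qed

lemma no_two_bit_protocol:
  assumes "cost P \<le> 2" "computes u 3 P"
  shows False
proof -
  define P' where "P' = map_inputs (flip (fst u)) (flip (fst (snd u))) (flip (snd (snd u))) P"
  have "computes (False, False, False) 3 P'"
    unfolding P'_def using assms(2) by (rule computes_flip)
  then have "correct_at (map_inputs word word word P') (x, y, xor x y)" for x y
    using promise_word f_word_eq by (simp add: computes_def run_map_inputs)
  moreover have "cost (map_inputs word word word P') \<le> 2"
    using assms(1) by (simp add: P'_def)
  ultimately show False by (intro two_bit_protocol_fails)
qed

theorem theorem3:
  fixes u :: "bool \<times> bool \<times> bool"
  shows "(\<forall>n\<ge>1. \<exists>P. cost P \<le> 3 \<and> computes u n P)
       \<and> \<not> (\<forall>n\<ge>1. \<exists>P. cost P \<le> 2 \<and> computes u n P)"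
proof
  show "\<forall>n\<ge>1. \<exists>P. cost P \<le> 3 \<and> computes u n P"
    using cost_three_bit_protocol computes_three_bit_protocol by (metis order_refl)
  show "\<not> (\<forall>n\<ge>1. \<exists>P. cost P \<le> 2 \<and> computes u n P)"
    using no_two_bit_protocol by (metis one_le_numeral)
qed

end
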